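(* Let $\Omega$ be a finite set, $V_\Omega=\mathbb{R}^\Omega$, and $V_\Upsilon,V_\Gamma\le V_\Omega$. Let $\mathcal{P}$, $\mathcal{Q}$, $\mathcal{R}$ be orthogonal decompositions of $V_\Omega$, $V_\Upsilon$, $V_\Gamma$, respectively, and write $\mathbf{I}_{\mathcal{R}}=\sum_{\mathbf{R}\in\mathcal{R}}\mathbf{R}$. Suppose $\mathcal{Q}$ and $\mathcal{R}$ are both structure balanced in relation to $\mathcal{P}$, with efficiency factors $\lambda_{\mathbf{PQ}}$ and $\lambda_{\mathbf{PR}}$, and suppose that for all $\mathbf{P}\in\mathcal{P}$ and $\mathbf{Q}\in\mathcal{Q}$, if $\mathbf{PQ}\neq\mathbf{0}$ and $\mathbf{P}\mathbf{I}_{\mathcal{R}}\neq\mathbf{0}$ then $\mathbf{P}\vartriangleright\mathbf{Q}=\mathbf{P}$. Then $\mathcal{R}$ is structure balanced in relation to $\mathcal{P}\vartriangleright\mathcal{Q}$, with $\lambda_{\mathbf{P}\vartriangleright\mathbf{Q},\mathbf{R}}=\lambda_{\mathbf{PR}}$ whenever $\lambda_{\mathbf{PQ}}\neq0$, and $\lambda_{\mathbf{P}\vdash\mathcal{Q},\mathbf{R}}=\lambda_{\mathbf{PR}}$ whenever $\mathbf{P}\vdash\mathcal{Q}\neq\mathbf{0}$. Moreover, $$(\mathcal{P}\vartriangleright\mathcal{Q})\vartriangleright\mathcal{R}=\{\mathbf{P}\vartriangleright\mathbf{R}:\mathbf{P}\in\mathcal{P},\mathbf{R}\in\mathcal{R},\lambda_{\mathbf{PR}}\neq0\}\cup\{\mathbf{P}\vdash\mathcal{R}:\mathbf{P}\in\mathcal{P},\mathbf{P}\mathbf{I}_{\mathcal{R}}\neq\mathbf{0}\}$$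 $$\cup\{\mathbf{P}\vartriangleright\mathbf{Q}:\mathbf{P}\in\mathcal{P},\mathbf{Q}\in\mathcal{Q},\lambda_{\mathbf{PQ}}\neq0,\mathbf{P}\mathbf{I}_{\mathcal{R}}=\mathbf{0}\}\cup\{\mathbf{P}\vdash\mathcal{Q}:\mathbf{P}\in\mathcal{P},\mathbf{P}\mathbf{I}_{\mathcal{R}}=\mathbf{0}\}.$$
   Context: $V_\Omega$ carries the standard inner product; all matrices are $\Omega\times\Omega$. An orthogonal decomposition of a subspace $W\le V_\Omega$ is a finite set of nonzero symmetric idempotent matrices that are mutually orthogonal and whose sum is the orthogonal projector onto $W$; when a decomposition is described by a list, zero matrices are discarded. For projectors $\mathbf{A},\mathbf{B}$: $\mathbf{B}$ has first-order balance in relation to $\mathbf{A}$ if $\mathbf{BAB}=\lambda_{\mathbf{AB}}\mathbf{B}$ for a scalar $\lambda_{\mathbf{AB}}$ (efficiency factor); $\lambda_{\mathbf{AB}}=0$ iff $\mathbf{AB}=\mathbf{0}$; if $\lambda_{\mathbf{AB}}\ne0$, $\mathbf{A}\vartriangleright\mathbf{B}=\lambda_{\mathbf{AB}}^{-1}\mathbf{ABA}$. A set $\mathcal{B}$ of projectors is structure balanced in relation to a set $\mathcal{A}$ of mutually orthogonal projectors if every $\mathbf{B}\in\mathcal{B}$ has first-order balance in relation to every $\mathbf{A}\in\mathcal{A}$, and $\mathbf{B}_1\mathbf{A}\mathbf{B}_2=\mathbf{0}$ for all $\mathbf{A}\in\mathcal{A}$ and distinct $\mathbf{B}_1,\mathbf{B}_2\in\mathcal{B}$.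 Then for $\mathbf{A}\in\mathcal{A}$, $\mathbf{A}\vdash\mathcal{B}=\mathbf{A}-\sum'_{\mathbf{B}}\mathbf{A}\vartriangleright\mathbf{B}$ (sum over $\mathbf{B}$ with $\lambda_{\mathbf{AB}}\ne0$), and $\mathcal{A}\vartriangleright\mathcal{B}=\{\mathbf{A}\vartriangleright\mathbf{B}:\mathbf{A}\in\mathcal{A},\mathbf{B}\in\mathcal{B},\lambda_{\mathbf{AB}}\neq0\}\cup\{\mathbf{A}\vdash\mathcal{B}:\mathbf{A}\in\mathcal{A}\}$ (zeros discarded). $\lambda_{\mathbf{P}\vartriangleright\mathbf{Q},\mathbf{R}}$ and $\lambda_{\mathbf{P}\vdash\mathcal{Q},\mathbf{R}}$ denote the efficiency factors of $\mathbf{R}$ in relation to $\mathbf{P}\vartriangleright\mathbf{Q}$ and $\mathbf{P}\vdash\mathcal{Q}$. *)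

theory Defs
  imports "HOL-Analysis.Analysis"
begin

type_synonym 'n mat = "real^'n^'n"

definition orth_projector :: "(real^'n::finite) set \<Rightarrow> 'n mat \<Rightarrow> bool" where
  "orth_projector W P \<longleftrightarrow> transpose P = P \<and> P ** P = P \<and> range (\<lambda>x. P *v x) = W"

definition orth_decomp :: "(real^'n::finite) set \<Rightarrow> 'n mat set \<Rightarrow> bool" where
  "orth_decomp W D \<longleftrightarrow> finite D \<and>
     (\<forall>A\<in>D. A \<noteq> 0 \<and> transpose A = A \<and> A ** A = A) \<and>
     (\<forall>A\<in>D. \<forall>B\<in>D. A \<noteq> B \<longrightarrow> A ** B = 0) \<and>
     orth_projector W (\<Sum>D)"

definition first_order_balance :: "('n::finite) mat \<Rightarrow> 'n mat \<Rightarrow> bool" where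
  "first_order_balance A B \<longleftrightarrow> (\<exists>l::real. B ** A ** B = l *\<^sub>R B)"

definition eff :: "('n::finite) mat \<Rightarrow> 'n mat \<Rightarrow> real" where
  "eff A B = (SOME l. B ** A ** B = l *\<^sub>R B)"

definition rhd :: "('n::finite) mat \<Rightarrow> 'n mat \<Rightarrow> 'n mat" where
  "rhd A B = inverse (eff A B) *\<^sub>R (A ** B ** A)"

definition vdash :: "('n::finite) mat \<Rightarrow> 'n mat set \<Rightarrow> 'n mat" where
  "vdash A Bs = A - (\<Sum>B\<in>{B\<in>Bs. eff A B \<noteq> 0}. rhd A B)"

definition struct_bal :: "('n::finite) mat set \<Rightarrow> 'n mat set \<Rightarrow> bool" where
  "struct_bal Bs As \<longleftrightarrow>
     (\<forall>B\<in>Bs. \<forall>A\<in>As. first_order_balance A B) \<and>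
     (\<forall>A\<in>As. \<forall>B1\<in>Bs. \<forall>B2\<in>Bs. B1 \<noteq> B2 \<longrightarrow> B1 ** A ** B2 = 0)"

definition rhd_set :: "('n::finite) mat set \<Rightarrow> 'n mat set \<Rightarrow> 'n mat set" where
  "rhd_set As Bs = ({rhd A B | A B. A \<in> As \<and> B \<in> Bs \<and> eff A B \<noteq> 0}
                    \<union> {vdash A Bs | A. A \<in> As}) - {0}"

end

theory Submission
  imports Defs
begin

text \<open>Split \<open>PP\<close> according to whether \<open>P I\<^sub>R\<close> vanishes. If it does not, the hypothesis
  forces \<open>P \<rhd> Q = P\<close> whenever \<open>\<lambda>\<^sub>P\<^sub>Q \<noteq> 0\<close>, and two distinct such \<open>Q\<^sub>1, Q\<^sub>2\<close> would give
  \<open>P = P P = c P Q\<^sub>1 P Q\<^sub>2 P = 0\<close> by structure balance of \<open>QQ\<close>; hence \<open>{P} \<rhd> QQ = {P}\<close>.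
  If it does, then \<open>P R = 0\<close> for all \<open>R \<in> RR\<close>, hence \<open>X R = 0\<close> for every \<open>X \<in> {P} \<rhd> QQ\<close>,
  as each such \<open>X\<close> ends with the factor \<open>P\<close>. Matrices annihilating \<open>RR\<close> are trivially
  balanced with respect to it, have efficiency factor \<open>0\<close> and are left unchanged by \<open>\<rhd> RR\<close>.
  Since \<open>\<rhd>\<close> acts elementwise on its first argument, the two cases combine.\<close>

lemma matrix_diff_mult: "((A::real^'m^'k) - B) ** C = A ** C - B ** C"
  by (simp add: matrix_matrix_mult_def vec_eq_iff sum_subtractf left_diff_distrib)

lemma matrix_sum_mult: "(\<Sum>i\<in>I. f i) ** (C::real^'p^'m) = (\<Sum>i\<in>I. f i ** C)"
  by (induction I rule: infinite_finite_induct)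
     (simp_all add: matrix_matrix_mult_def vec_eq_iff distrib_right sum.distrib)

lemma orth_decomp_sum_mult:
  assumes "orth_decomp W D" and "R \<in> D"
  shows "(\<Sum>D) ** R = R"
proof -
  have "(\<Sum>D) ** R = (\<Sum>R'\<in>D. R' ** R)" by (rule matrix_sum_mult)
  also have "\<dots> = (\<Sum>R'\<in>D. if R' = R then R else 0)"
    using assms unfolding orth_decomp_def by (intro sum.cong) auto
  also have "\<dots> = R" using assms unfolding orth_decomp_def by simp
  finally show ?thesis .
qed

lemma mult_orth_decomp_eq_0:
  assumes "orth_decomp W D" and "A ** (\<Sum>D) = 0" and "R \<in> D"
  shows "A ** R = 0"
  by (metis assms matrix_mul_assoc orth_decomp_sum_mult times0_left)

lemma eff_unique:
  assumes "B \<noteq> 0" and "B ** A ** B = l *\<^sub>R B"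
  shows "eff A B = l"
proof -
  have "B ** A ** B = eff A B *\<^sub>R B" unfolding eff_def by (rule someI) (rule assms(2))
  with assms have "(eff A B - l) *\<^sub>R B = 0" by (simp add: scaleR_diff_left)
  with assms(1) show ?thesis by simp
qed

lemma eff_eq_0_if_mult_eq_0:
  assumes "B \<noteq> 0" and "A ** B = 0"
  shows "eff A B = 0"
  using assms by (intro eff_unique) (simp_all flip: matrix_mul_assoc)

lemma rhd_mult_eq_0: "A ** R = 0 \<Longrightarrow> rhd A B ** R = 0"
  by (simp add: rhd_def matrix_mul_assoc flip: scalar_matrix_assoc)
     (simp flip: matrix_mul_assoc)

lemma vdash_mult_eq_0: "A ** R = 0 \<Longrightarrow> vdash A Bs ** R = 0"
  by (simp add: vdash_def matrix_diff_mult matrix_sum_mult rhd_mult_eq_0)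

lemma vdash_eq_self:
  assumes "\<forall>B\<in>Bs. eff A B = 0"
  shows "vdash A Bs = A"
proof -
  have none: "{B\<in>Bs. eff A B \<noteq> 0} = {}" using assms by blast
  show ?thesis unfolding vdash_def none by simp
qed

lemma vdash_eq_0_or_self:
  assumes idem: "P ** P = P" and "P \<noteq> 0"
    and bal: "\<forall>Q1\<in>QQ. \<forall>Q2\<in>QQ. Q1 \<noteq> Q2 \<longrightarrow> Q1 ** P ** Q2 = 0"
    and absorb: "\<forall>Q\<in>QQ. eff P Q \<noteq> 0 \<longrightarrow> rhd P Q = P"
  shows "vdash P QQ = 0 \<or> vdash P QQ = P"
proof (cases "\<exists>Q\<in>QQ. eff P Q \<noteq> 0")
  case False
  then show ?thesis by (simp add: vdash_eq_self)
next
  case True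
  then obtain Q where Q: "Q \<in> QQ" "eff P Q \<noteq> 0" by blast
  have "{Q'\<in>QQ. eff P Q' \<noteq> 0} = {Q}"
  proof (rule ccontr)
    assume "{Q'\<in>QQ. eff P Q' \<noteq> 0} \<noteq> {Q}"
    then obtain Q' where Q': "Q' \<in> QQ" "eff P Q' \<noteq> 0" "Q \<noteq> Q'" using Q by blast
    have "P = rhd P Q ** rhd P Q'" using idem absorb Q Q' by simp
    also have "\<dots> = (inverse (eff P Q) * inverse (eff P Q')) *\<^sub>R (P ** (Q ** (P ** P) ** Q') ** P)"
      by (simp add: rhd_def matrix_scalar_ac matrix_mul_assoc flip: scalar_matrix_assoc)
    also have "\<dots> = 0" using bal Q Q' idem by simp
    finally show False using \<open>P \<noteq> 0\<close> by simp
  qed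
  then show ?thesis using absorb Q by (simp add: vdash_def)
qed

lemma rhd_set_singleton:
  "rhd_set {A} Bs = ({rhd A B | B. B \<in> Bs \<and> eff A B \<noteq> 0} \<union> {vdash A Bs}) - {0}"
  unfolding rhd_set_def by blast

lemma rhd_set_singleton_eq_self:
  assumes "P ** P = P" and "P \<noteq> 0"
    and "\<forall>Q1\<in>QQ. \<forall>Q2\<in>QQ. Q1 \<noteq> Q2 \<longrightarrow> Q1 ** P ** Q2 = 0"
    and "\<forall>Q\<in>QQ. eff P Q \<noteq> 0 \<longrightarrow> rhd P Q = P"
  shows "rhd_set {P} QQ = {P}"
proof (cases "\<exists>Q\<in>QQ. eff P Q \<noteq> 0")
  case True
  then have "P \<in> {rhd P Q | Q. Q \<in> QQ \<and> eff P Q \<noteq> 0}" using assms(4) by force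
  then show ?thesis
    using vdash_eq_0_or_self[OF assms] assms(2,4) unfolding rhd_set_singleton by auto
next
  case False
  then show ?thesis using assms(2) vdash_eq_self[of QQ P] unfolding rhd_set_singleton by auto
qed

lemma rhd_set_eq_UN: "rhd_set As Bs = (\<Union>A\<in>As. rhd_set {A} Bs)"
  unfolding rhd_set_def by blast

lemma rhd_set_UN: "rhd_set (\<Union>i\<in>I. As i) Bs = (\<Union>i\<in>I. rhd_set (As i) Bs)"
  unfolding rhd_set_def by blast

lemma rhd_set_annihilators:
  assumes "\<forall>X\<in>Xs. \<forall>R\<in>RR. X ** R = 0" and "0 \<notin> RR"
  shows "rhd_set Xs RR = Xs - {0}"
proof -
  have eff: "eff X R = 0" if "X \<in> Xs" "R \<in> RR" for X R
    using assms that by (metis eff_eq_0_if_mult_eq_0)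
  then have "vdash X RR = X" if "X \<in> Xs" for X
    using that by (simp add: vdash_eq_self)
  with eff show ?thesis unfolding rhd_set_def by force
qed

lemma struct_bal_UN: "\<forall>i\<in>I. struct_bal Bs (As i) \<Longrightarrow> struct_bal Bs (\<Union>i\<in>I. As i)"
  unfolding struct_bal_def by blast

lemma struct_bal_annihilators:
  assumes "\<forall>X\<in>Xs. \<forall>B\<in>Bs. X ** B = 0"
  shows "struct_bal Bs Xs"
  unfolding struct_bal_def first_order_balance_def
  using assms by (auto simp flip: matrix_mul_assoc intro!: exI[of _ 0])

lemma struct_bal_subset: "struct_bal Bs As \<Longrightarrow> As' \<subseteq> As \<Longrightarrow> struct_bal Bs As'"
  unfolding struct_bal_def by blast

lemma rhd_set_singleton_annihilates:
  assumes "\<forall>R\<in>RR. P ** R = 0"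
  shows "\<forall>X\<in>rhd_set {P} QQ. \<forall>R\<in>RR. X ** R = 0"
  using assms by (auto simp: rhd_set_singleton rhd_mult_eq_0 vdash_mult_eq_0)

locale balanced_decompositions =
  fixes VP VQ VR :: "(real^'n::finite) set"
    and PP QQ RR :: "'n mat set"
  assumes PP_decomp: "orth_decomp VP PP" and QQ_decomp: "orth_decomp VQ QQ"
    and RR_decomp: "orth_decomp VR RR"
    and QQ_bal: "struct_bal QQ PP" and RR_bal: "struct_bal RR PP"
    and absorb: "\<lbrakk>P \<in> PP; Q \<in> QQ; P ** Q \<noteq> 0; P ** (\<Sum>RR) \<noteq> 0\<rbrakk> \<Longrightarrow> rhd P Q = P"
begin

lemma QQ_nonzero: "0 \<notin> QQ" and RR_nonzero: "0 \<notin> RR"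
  using QQ_decomp RR_decomp unfolding orth_decomp_def by auto

lemma rhd_eq_self:
  assumes "P \<in> PP" and "P ** (\<Sum>RR) \<noteq> 0"
  shows "\<forall>Q\<in>QQ. eff P Q \<noteq> 0 \<longrightarrow> rhd P Q = P"
  using absorb assms QQ_nonzero eff_eq_0_if_mult_eq_0 by metis

lemma rhd_set_singleton_eq_self_if_not_orth:
  assumes "P \<in> PP" and "P ** (\<Sum>RR) \<noteq> 0"
  shows "rhd_set {P} QQ = {P}" and "vdash P QQ = 0 \<or> vdash P QQ = P"
proof -
  have "P ** P = P" "P \<noteq> 0" "\<forall>Q1\<in>QQ. \<forall>Q2\<in>QQ. Q1 \<noteq> Q2 \<longrightarrow> Q1 ** P ** Q2 = 0"
    using PP_decomp QQ_bal assms(1) unfolding orth_decomp_def struct_bal_def by auto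
  with rhd_eq_self[OF assms] show "rhd_set {P} QQ = {P}" "vdash P QQ = 0 \<or> vdash P QQ = P"
    by (simp_all add: rhd_set_singleton_eq_self vdash_eq_0_or_self)
qed

lemma annihilates_RR_if_orth:
  assumes "P \<in> PP" and "P ** (\<Sum>RR) = 0" and "R \<in> RR"
  shows "P ** R = 0" and "rhd P Q ** R = 0" and "vdash P QQ ** R = 0" and "eff P R = 0"
proof -
  show "P ** R = 0" using mult_orth_decomp_eq_0[OF RR_decomp assms(2,3)] .
  then show "rhd P Q ** R = 0" "vdash P QQ ** R = 0"
    by (simp_all add: rhd_mult_eq_0 vdash_mult_eq_0)
  show "eff P R = 0"
    using \<open>P ** R = 0\<close> RR_nonzero assms(3) by (metis eff_eq_0_if_mult_eq_0)
qed

lemma rhd_set_singleton_annihilates_RR: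
  assumes "P \<in> PP" and "P ** (\<Sum>RR) = 0"
  shows "\<forall>X\<in>rhd_set {P} QQ. \<forall>R\<in>RR. X ** R = 0"
  using assms annihilates_RR_if_orth(1) rhd_set_singleton_annihilates[of RR P QQ] by blast

lemma struct_bal_rhd_set: "struct_bal RR (rhd_set PP QQ)"
  unfolding rhd_set_eq_UN[of PP]
proof (intro struct_bal_UN ballI)
  fix P assume "P \<in> PP"
  show "struct_bal RR (rhd_set {P} QQ)"
  proof (cases "P ** (\<Sum>RR) = 0")
    case True
    then show ?thesis
      using rhd_set_singleton_annihilates_RR \<open>P \<in> PP\<close> by (simp add: struct_bal_annihilators)
  next
    case False
    then show ?thesis
      using rhd_set_singleton_eq_self_if_not_orth(1) \<open>P \<in> PP\<close> RR_bal
        struct_bal_subset[of RR PP "{P}"] by simp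
  qed
qed

lemma eff_eq_if_self_or_annihilates:
  assumes "P \<in> PP" and "R \<in> RR" and "X = P \<or> P ** (\<Sum>RR) = 0 \<and> X ** R = 0"
  shows "eff X R = eff P R"
  using assms annihilates_RR_if_orth(4) RR_nonzero eff_eq_0_if_mult_eq_0 by metis

lemma eff_rhd_eq:
  "\<lbrakk>P \<in> PP; Q \<in> QQ; R \<in> RR; eff P Q \<noteq> 0\<rbrakk> \<Longrightarrow> eff (rhd P Q) R = eff P R"
  using eff_eq_if_self_or_annihilates rhd_eq_self annihilates_RR_if_orth(2) by metis

lemma eff_vdash_eq:
  "\<lbrakk>P \<in> PP; R \<in> RR; vdash P QQ \<noteq> 0\<rbrakk> \<Longrightarrow> eff (vdash P QQ) R = eff P R"
  using eff_eq_if_self_or_annihilates rhd_set_singleton_eq_self_if_not_orth(2)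
    annihilates_RR_if_orth(3) by metis

lemma rhd_set_rhd_set_eq_UN:
  "rhd_set (rhd_set PP QQ) RR
    = (\<Union>P\<in>PP. if P ** (\<Sum>RR) = 0 then rhd_set {P} QQ else rhd_set {P} RR)"
  unfolding rhd_set_eq_UN[of PP] rhd_set_UN
proof (rule SUP_cong)
  fix P assume "P \<in> PP"
  show "rhd_set (rhd_set {P} QQ) RR
      = (if P ** (\<Sum>RR) = 0 then rhd_set {P} QQ else rhd_set {P} RR)"
  proof (cases "P ** (\<Sum>RR) = 0")
    case True
    have "0 \<notin> rhd_set {P} QQ" by (simp add: rhd_set_singleton)
    then show ?thesis
      using True rhd_set_annihilators[OF rhd_set_singleton_annihilates_RR[OF \<open>P \<in> PP\<close> True]
          RR_nonzero] by simp
  next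
    case False
    then show ?thesis using rhd_set_singleton_eq_self_if_not_orth(1)[OF \<open>P \<in> PP\<close> False] by simp
  qed
qed simp

lemma rhd_set_rhd_set_eq:
  "rhd_set (rhd_set PP QQ) RR =
    ({rhd P R | P R. P \<in> PP \<and> R \<in> RR \<and> eff P R \<noteq> 0}
     \<union> {vdash P RR | P. P \<in> PP \<and> P ** (\<Sum>RR) \<noteq> 0}
     \<union> {rhd P Q | P Q. P \<in> PP \<and> Q \<in> QQ \<and> eff P Q \<noteq> 0 \<and> P ** (\<Sum>RR) = 0}
     \<union> {vdash P QQ | P. P \<in> PP \<and> P ** (\<Sum>RR) = 0}) - {0}" (is "_ = ?rhs")
proof -
  let ?PM = "{P\<in>PP. P ** (\<Sum>RR) \<noteq> 0}" and ?PO = "{P\<in>PP. P ** (\<Sum>RR) = 0}"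
  have "rhd_set (rhd_set PP QQ) RR = (\<Union>P\<in>?PM. rhd_set {P} RR) \<union> (\<Union>P\<in>?PO. rhd_set {P} QQ)"
    unfolding rhd_set_rhd_set_eq_UN by auto
  also have "\<dots> = rhd_set ?PM RR \<union> rhd_set ?PO QQ"
    unfolding rhd_set_eq_UN[of ?PM] rhd_set_eq_UN[of ?PO] ..
  also have "\<dots> = ?rhs"
    unfolding rhd_set_def using annihilates_RR_if_orth(4) by auto
  finally show ?thesis .
qed

end

theorem theorem2:
  fixes VU VG :: "(real^'n::finite) set"
    and PP QQ RR :: "'n mat set"
  assumes "subspace VU" and "subspace VG"
    and "orth_decomp UNIV PP" and "orth_decomp VU QQ" and "orth_decomp VG RR"
    and "struct_bal QQ PP" and "struct_bal RR PP"
    and "\<forall>P\<in>PP. \<forall>Q\<in>QQ. P ** Q \<noteq> 0 \<and> P ** (\<Sum>RR) \<noteq> 0 \<longrightarrow> rhd P Q = P"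
  shows "struct_bal RR (rhd_set PP QQ)
    \<and> (\<forall>P\<in>PP. \<forall>Q\<in>QQ. \<forall>R\<in>RR. eff P Q \<noteq> 0 \<longrightarrow> eff (rhd P Q) R = eff P R)
    \<and> (\<forall>P\<in>PP. \<forall>R\<in>RR. vdash P QQ \<noteq> 0 \<longrightarrow> eff (vdash P QQ) R = eff P R)
    \<and> rhd_set (rhd_set PP QQ) RR =
        ({rhd P R | P R. P \<in> PP \<and> R \<in> RR \<and> eff P R \<noteq> 0}
         \<union> {vdash P RR | P. P \<in> PP \<and> P ** (\<Sum>RR) \<noteq> 0}
         \<union> {rhd P Q | P Q. P \<in> PP \<and> Q \<in> QQ \<and> eff P Q \<noteq> 0 \<and> P ** (\<Sum>RR) = 0}
         \<union> {vdash P QQ | P. P \<in> PP \<and> P ** (\<Sum>RR) = 0}) - {0}"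
proof -
  interpret balanced_decompositions UNIV VU VG PP QQ RR
    using assms(3-8) by unfold_locales blast+
  show ?thesis
    by (intro conjI ballI impI struct_bal_rhd_set eff_rhd_eq eff_vdash_eq rhd_set_rhd_set_eq)
qed

end
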